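(* Let $A$ be an irreducible abstract state space and $B$ an abstract state space. Then every isomorphism state $\omega \in A\otimes_{\max} B$ (if any exists) is pure in $A\otimes_{\max} B$, i.e., lies on an extremal ray of the positive cone of $A\otimes_{\max} B$ (equivalently, $\hat\omega$ lies on an extremal ray of the cone of positive linear maps $A^*\to B$).
   Context: An abstract state space is a pair $(A,u_A)$ where $A$ is a finite-dimensional real vector space with a closed, pointed, generating convex cone $A_+$, and $u_A$ is a strictly positive linear functional (an interior point of the dual cone $A^*_+=\{f\in A^*: f(A_+)\subseteq[0,\infty)\}$). $A$ is irreducible if it admits no decomposition $A=A_1\oplus A_2$ with $A_1,A_2$ nonzero subspaces and $A_+=(A_+\cap A_1)+(A_+\cap A_2)$. $A\otimes_{\max}B$ is the space of bilinear forms on $A^*\times B^*$, with positive cone consisting of forms $\omega$ with $\omega(a,b)\ge0$ for all $a\in A^*_+$, $b\in B^*_+$; a state is a positive such $\omega$ with $\omega(u_A,u_B)=1$. For a bilinear form $\omega$, define $\hat\omega:A^*\to B=B^{**}$ by $\hat\omega(a)(b)=\omega(a,b)$. A state $\omega$ is an isomorphism state if $\hat\omega:A^*\to B$ is an order-isomorphism, i.e., a linear bijection with $\hat\omega(a)\in B_+$ iff $a\in A^*_+$. *)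

theory Defs
  imports "HOL-Analysis.Analysis"
begin

text \<open>The dual space is identified with the space itself via the inner product:
  the functional f corresponds to the vector y with f(x) = y \<bullet> x.\<close>

definition dual_cone :: "'a::euclidean_space set \<Rightarrow> 'a set" where
  "dual_cone K = {y. \<forall>x\<in>K. 0 \<le> y \<bullet> x}"

definition closed_pointed_generating_cone :: "'a::euclidean_space set \<Rightarrow> bool" where
  "closed_pointed_generating_cone K \<longleftrightarrow>
     closed K \<and> convex K \<and> cone K \<and> K \<inter> uminus ` K = {0} \<and>
     {x - y | x y. x \<in> K \<and> y \<in> K} = UNIV"

text \<open>An abstract state space (A, u_A): positive cone K and order unit u (as a dual vector),
  u an interior point of the dual cone.\<close>
definition abstract_state_space :: "'a::euclidean_space set \<Rightarrow> 'a \<Rightarrow> bool" where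
  "abstract_state_space K u \<longleftrightarrow> closed_pointed_generating_cone K \<and> u \<in> interior (dual_cone K)"

definition irreducible_cone :: "'a::euclidean_space set \<Rightarrow> bool" where
  "irreducible_cone K \<longleftrightarrow>
     \<not> (\<exists>A1 A2. subspace A1 \<and> subspace A2 \<and> A1 \<noteq> {0} \<and> A2 \<noteq> {0} \<and>
            A1 \<inter> A2 = {0} \<and> {x + y | x y. x \<in> A1 \<and> y \<in> A2} = UNIV \<and>
            K = {x + y | x y. x \<in> K \<inter> A1 \<and> y \<in> K \<inter> A2})"

text \<open>Positive elements of A \<otimes>max B: bilinear forms on A* \<times> B*, nonnegative on A*_+ \<times> B*_+.\<close>
definition max_tensor_positive ::
  "'a::euclidean_space set \<Rightarrow> 'b::euclidean_space set \<Rightarrow> ('a \<Rightarrow> 'b \<Rightarrow> real) \<Rightarrow> bool" where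
  "max_tensor_positive KA KB \<omega> \<longleftrightarrow> bilinear \<omega> \<and>
     (\<forall>a\<in>dual_cone KA. \<forall>b\<in>dual_cone KB. 0 \<le> \<omega> a b)"

definition max_tensor_state ::
  "'a::euclidean_space set \<Rightarrow> 'a \<Rightarrow> 'b::euclidean_space set \<Rightarrow> 'b \<Rightarrow> ('a \<Rightarrow> 'b \<Rightarrow> real) \<Rightarrow> bool" where
  "max_tensor_state KA uA KB uB \<omega> \<longleftrightarrow> max_tensor_positive KA KB \<omega> \<and> \<omega> uA uB = 1"

text \<open>\<omega>-hat : A* \<rightarrow> B = B**, the vector v in B with v \<bullet> b = \<omega> a b for all b.\<close>
definition omega_hat :: "('a::euclidean_space \<Rightarrow> 'b::euclidean_space \<Rightarrow> real) \<Rightarrow> 'a \<Rightarrow> 'b" where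
  "omega_hat \<omega> a = (\<Sum>i\<in>Basis. \<omega> a i *\<^sub>R i)"

definition isomorphism_state ::
  "'a::euclidean_space set \<Rightarrow> 'a \<Rightarrow> 'b::euclidean_space set \<Rightarrow> 'b \<Rightarrow> ('a \<Rightarrow> 'b \<Rightarrow> real) \<Rightarrow> bool" where
  "isomorphism_state KA uA KB uB \<omega> \<longleftrightarrow> max_tensor_state KA uA KB uB \<omega> \<and>
     linear (omega_hat \<omega>) \<and> bij (omega_hat \<omega>) \<and>
     (\<forall>a. omega_hat \<omega> a \<in> KB \<longleftrightarrow> a \<in> dual_cone KA)"

definition pure_max_tensor ::
  "'a::euclidean_space set \<Rightarrow> 'b::euclidean_space set \<Rightarrow> ('a \<Rightarrow> 'b \<Rightarrow> real) \<Rightarrow> bool" where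
  "pure_max_tensor KA KB \<omega> \<longleftrightarrow> max_tensor_positive KA KB \<omega> \<and> (\<exists>a b. \<omega> a b \<noteq> 0) \<and>
     (\<forall>\<omega>1 \<omega>2. max_tensor_positive KA KB \<omega>1 \<and> max_tensor_positive KA KB \<omega>2 \<and>
        (\<forall>a b. \<omega> a b = \<omega>1 a b + \<omega>2 a b) \<longrightarrow> (\<exists>t\<ge>0. \<forall>a b. \<omega>1 a b = t * \<omega> a b))"

end

theory Submission
  imports Defs
begin

text \<open>Write \<omega> = \<omega>1 + \<omega>2 with both summands positive. Pulling \<omega>1 back along the order
  isomorphism \<omega>-hat gives a linear map S on A* with 0 \<le> S \<le> id for the dual cone, and its
  adjoint T satisfies 0 \<le> T \<le> id on the cone A+. Such a T maps every extreme ray of A+ into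
  itself, so the extreme points of a compact base are eigenvectors. If \<mu> is one eigenvalue, every
  extreme point lies in the kernel or in the range of T - \<mu>, hence by Krein-Milman A+ splits
  along these two complementary subspaces; irreducibility forces the range to vanish. So T, and
  with it S, is a nonnegative scalar t, i.e. \<omega>1 = t \<omega>: \<omega> spans an extremal ray.\<close>

lemma closed_pointed_generating_cone_imp_convex_cone:
  "closed_pointed_generating_cone K \<Longrightarrow> convex_cone K"
  unfolding closed_pointed_generating_cone_def convex_cone_def conic_def cone_def by blast

lemma dual_cone_dual_cone:
  fixes K :: "'a::euclidean_space set"
  assumes "closed K" "convex_cone K"
  shows "dual_cone (dual_cone K) = K"
proof
  show "K \<subseteq> dual_cone (dual_cone K)"
    by (auto simp: dual_cone_def inner_commute)
  show "dual_cone (dual_cone K) \<subseteq> K"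
  proof
    fix z assume z: "z \<in> dual_cone (dual_cone K)"
    show "z \<in> K"
    proof (rule ccontr)
      assume "z \<notin> K"
      moreover have "convex K"
        using assms(2) by (simp add: convex_cone_def)
      ultimately obtain a b where ab: "a \<bullet> z < b" "\<forall>x\<in>K. b < a \<bullet> x"
        using separating_hyperplane_closed_point assms(1) by blast
      have "b < 0"
        using ab(2) convex_cone_contains_0[OF assms(2)] by force
      have "a \<in> dual_cone K"
        unfolding dual_cone_def
      proof (clarify, rule ccontr)
        fix x assume x: "x \<in> K" and neg: "\<not> 0 \<le> a \<bullet> x"
        have "(b / (a \<bullet> x)) *\<^sub>R x \<in> K"
          using convex_cone_scaleR[OF assms(2) _ x] \<open>b < 0\<close> neg
          by (simp add: divide_nonpos_neg)
        moreover have "a \<bullet> ((b / (a \<bullet> x)) *\<^sub>R x) = b"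
          using neg by simp
        ultimately show False
          using ab(2) by force
      qed
      with z have "0 \<le> a \<bullet> z"
        by (auto simp: dual_cone_def inner_commute)
      with ab \<open>b < 0\<close> show False
        by linarith
    qed
  qed
qed

lemma interior_dual_cone_coercive:
  fixes K :: "'a::euclidean_space set"
  assumes "u \<in> interior (dual_cone K)"
  obtains \<epsilon> where "\<epsilon> > 0" "\<And>x. x \<in> K \<Longrightarrow> \<epsilon> * norm x \<le> u \<bullet> x"
proof -
  obtain e where e: "e > 0" "ball u e \<subseteq> dual_cone K"
    using assms by (meson mem_interior)
  have "e/2 * norm x \<le> u \<bullet> x" if x: "x \<in> K" for x
  proof (cases "x = 0")
    case False
    define y where "y = u - (e/2 / norm x) *\<^sub>R x"
    have "y \<in> dual_cone K"
      using False e by (auto simp: y_def dist_norm)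
    then have "0 \<le> y \<bullet> x"
      using x by (auto simp: dual_cone_def)
    also have "y \<bullet> x = u \<bullet> x - e/2 * norm x"
      using False by (simp add: y_def inner_diff_left dot_square_norm power2_eq_square)
    finally show ?thesis by simp
  qed simp
  then show ?thesis
    using that[of "e/2"] e(1) by simp
qed

lemma interior_dual_cone_pos:
  fixes K :: "'a::euclidean_space set"
  assumes "u \<in> interior (dual_cone K)" "x \<in> K" "x \<noteq> 0"
  shows "0 < u \<bullet> x"
proof -
  obtain \<epsilon> where "\<epsilon> > 0" "\<epsilon> * norm x \<le> u \<bullet> x"
    using interior_dual_cone_coercive[OF assms(1)] assms(2) by metis
  moreover have "0 < \<epsilon> * norm x"
    using \<open>\<epsilon> > 0\<close> assms(3) by simp
  ultimately show ?thesis
    by linarith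
qed

definition cone_base :: "'a::euclidean_space set \<Rightarrow> 'a \<Rightarrow> 'a set" where
  "cone_base K u = {x \<in> K. u \<bullet> x = 1}"

lemma compact_cone_base:
  fixes K :: "'a::euclidean_space set"
  assumes "closed K" "u \<in> interior (dual_cone K)"
  shows "compact (cone_base K u)"
proof -
  obtain \<epsilon> where \<epsilon>: "\<epsilon> > 0" "\<And>x. x \<in> K \<Longrightarrow> \<epsilon> * norm x \<le> u \<bullet> x"
    using interior_dual_cone_coercive[OF assms(2)] by blast
  have "cone_base K u \<subseteq> cball 0 (1/\<epsilon>)"
  proof
    fix x assume "x \<in> cone_base K u"
    then have "x \<in> K" "u \<bullet> x = 1"
      by (auto simp: cone_base_def)
    then have "\<epsilon> * norm x \<le> 1"
      using \<epsilon>(2)[of x] by simp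
    then show "x \<in> cball 0 (1/\<epsilon>)"
      using \<epsilon>(1) by (simp add: field_simps)
  qed
  moreover have "closed (cone_base K u)"
    unfolding cone_base_def
    using closed_Int[OF assms(1) closed_hyperplane[of u 1]] by (simp add: Int_def)
  ultimately show ?thesis
    by (meson bounded_cball bounded_subset compact_eq_bounded_closed)
qed

lemma convex_cone_base:
  "convex K \<Longrightarrow> convex (cone_base K u)"
  unfolding cone_base_def
  by (simp add: Collect_conj_eq convex_Int convex_hyperplane)

lemma scaleR_mem_cone_base:
  assumes "convex_cone K" "u \<in> interior (dual_cone K)" "x \<in> K" "x \<noteq> 0"
  shows "(1 / (u \<bullet> x)) *\<^sub>R x \<in> cone_base K u"
  using interior_dual_cone_pos[OF assms(2-4)] convex_cone_scaleR[OF assms(1) _ assms(3)]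
  by (simp add: cone_base_def)

lemma cone_subset_if_extreme_points_of_base_subset:
  fixes K :: "'a::euclidean_space set"
  assumes "closed K" "convex_cone K" "u \<in> interior (dual_cone K)" "convex_cone C"
    and ext: "\<And>e. e extreme_point_of cone_base K u \<Longrightarrow> e \<in> C"
  shows "K \<subseteq> C"
proof
  have "cone_base K u = convex hull {e. e extreme_point_of cone_base K u}"
    using Krein_Milman_Minkowski compact_cone_base convex_cone_base assms(1-3)
    by (metis convex_cone_def)
  also have "\<dots> \<subseteq> C"
    using ext assms(4) by (intro hull_minimal) (auto simp: convex_cone_def)
  finally have base: "cone_base K u \<subseteq> C" .
  fix x assume x: "x \<in> K"
  show "x \<in> C"
  proof (cases "x = 0")
    case True then show ?thesis using convex_cone_contains_0[OF assms(4)] by simp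
  next
    case False
    have "x = (u \<bullet> x) *\<^sub>R ((1 / (u \<bullet> x)) *\<^sub>R x)"
      using interior_dual_cone_pos[OF assms(3) x False] by simp
    also have "\<dots> \<in> C"
      using convex_cone_scaleR[OF assms(4) less_imp_le[OF interior_dual_cone_pos[OF assms(3) x False]]]
        base scaleR_mem_cone_base[OF assms(2,3) x False]
      by blast
    finally show ?thesis .
  qed
qed

lemma extreme_point_of_cone_base_summand:
  assumes K: "convex_cone K" and u: "u \<in> interior (dual_cone K)"
    and e: "e extreme_point_of cone_base K u"
    and a: "a \<in> K" and b: "b \<in> K" and sum: "a + b = e"
  shows "a = (u \<bullet> a) *\<^sub>R e"
proof -
  have ue: "u \<bullet> e = 1"
    using e by (auto simp: extreme_point_of_def cone_base_def)
  consider "a = 0" | "b = 0" | "a \<noteq> 0" "b \<noteq> 0" by blast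
  then show ?thesis
  proof cases
    case 3
    define \<alpha> where "\<alpha> = u \<bullet> a"
    have ub: "u \<bullet> b = 1 - \<alpha>"
      using ue sum by (auto simp: \<alpha>_def inner_add_right)
    have \<alpha>: "0 < \<alpha>" "\<alpha> < 1"
      using interior_dual_cone_pos[OF u a] interior_dual_cone_pos[OF u b] 3 ub
      by (auto simp: \<alpha>_def)
    define s1 where "s1 = (1 / \<alpha>) *\<^sub>R a"
    define s2 where "s2 = (1 / (1 - \<alpha>)) *\<^sub>R b"
    have s: "s1 \<in> cone_base K u" "s2 \<in> cone_base K u"
      using scaleR_mem_cone_base[OF K u a] scaleR_mem_cone_base[OF K u b] 3 ub
      by (simp_all add: s1_def s2_def \<alpha>_def)
    have e_comb: "e = (1 - (1 - \<alpha>)) *\<^sub>R s1 + (1 - \<alpha>) *\<^sub>R s2"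
      using \<alpha> sum by (simp add: s1_def s2_def)
    have "s1 = s2"
    proof (rule ccontr)
      assume "s1 \<noteq> s2"
      then have "e \<in> open_segment s1 s2"
        using \<alpha> e_comb unfolding in_segment by (intro conjI exI[of _ "1 - \<alpha>"]) auto
      then show False
        using e s by (auto simp: extreme_point_of_def)
    qed
    then have "e = s1"
      using e_comb by (simp flip: scaleR_add_left)
    then show ?thesis
      using \<alpha> by (simp add: s1_def \<alpha>_def)
  qed (use sum ue in auto)
qed

lemma linear_inj_on_if_image_eq:
  fixes f :: "'a::euclidean_space \<Rightarrow> 'a"
  assumes lf: "linear f" and S: "subspace S" and fS: "f ` S = S"
  shows "inj_on f S"
proof -
  obtain B where B: "B \<subseteq> S" "independent B" "S \<subseteq> span B" "card B = dim S"
    using basis_exists by blast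
  have fin: "finite B"
    using B(2) independent_bound by blast
  have fB: "f ` B \<subseteq> S"
    using B(1) fS by blast
  have "S = f ` S"
    using fS by simp
  also have "\<dots> \<subseteq> span (f ` B)"
    using B(3) by (metis image_mono lf span_linear_image)
  finally have S_span: "S \<subseteq> span (f ` B)" .
  have card_fB: "card (f ` B) \<le> dim S"
    using B(4) card_image_le[OF fin] by simp
  have "independent (f ` B)"
    using card_le_dim_spanning[OF fB S_span finite_imageI[OF fin] card_fB] .
  moreover have "card (f ` B) = card B"
    using span_card_ge_dim[OF fB S_span finite_imageI[OF fin]] card_fB B(4) by simp
  then have "inj_on f B"
    using fin by (simp add: inj_on_iff_eq_card)
  ultimately have "inj_on f (span B)"
    using linear_inj_on_span_independent_image[OF lf] by blast
  then show ?thesis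
    using B(3) inj_on_subset by blast
qed

lemma linear_kernel_Int_range:
  fixes D :: "'a::euclidean_space \<Rightarrow> 'a"
  assumes lin: "linear D" and sum: "{x + y | x y. D x = 0 \<and> y \<in> range D} = UNIV"
  shows "{x. D x = 0} \<inter> range D = {0}"
proof -
  have "range D \<subseteq> D ` range D"
  proof
    fix r assume "r \<in> range D"
    then obtain v where v: "r = D v" by blast
    obtain n r' where "v = n + r'" "D n = 0" "r' \<in> range D"
      using sum by blast
    then show "r \<in> D ` range D"
      using v linear_add[OF lin] by auto
  qed
  then have inj: "inj_on D (range D)"
    using linear_inj_on_if_image_eq[OF lin linear_subspace_image[OF lin subspace_UNIV]]
    by blast
  have "x = 0" if "D x = 0" "x \<in> range D" for x
    using inj_onD[OF inj, of x 0] that linear_0[OF lin] by auto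
  then show ?thesis
    using linear_0[OF lin] by auto
qed

lemma eigenvector_mem_range:
  fixes T :: "'a::real_vector \<Rightarrow> 'a"
  assumes lin: "linear T" and eig: "T e = l *\<^sub>R e" and "l \<noteq> \<mu>"
  shows "e \<in> range (\<lambda>x. T x - \<mu> *\<^sub>R x)"
proof
  show "e = T ((1 / (l - \<mu>)) *\<^sub>R e) - \<mu> *\<^sub>R ((1 / (l - \<mu>)) *\<^sub>R e)"
    using \<open>l \<noteq> \<mu>\<close> by (simp add: linear_scale[OF lin] eig flip: scaleR_diff_left diff_divide_distrib)
qed simp

lemma convex_cone_Int_subspace:
  "convex_cone K \<Longrightarrow> subspace N \<Longrightarrow> convex_cone (K \<inter> N)"
  by (simp add: convex_cone_iff subspace_def)

lemma convex_cone_set_plus: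
  assumes "convex_cone A" "convex_cone B"
  shows "convex_cone {x + y | x y. x \<in> A \<and> y \<in> B}"
proof -
  have "{x + y | x y. x \<in> A \<and> y \<in> B} = (\<Union>x\<in>A. \<Union>y\<in>B. {x + y})"
    by blast
  then show ?thesis
    using convex_cone_sums[OF assms] by simp
qed

lemma generating_cone_split_imp_sum_UNIV:
  assumes "subspace A1" "subspace A2"
    and gen: "{x - y | x y. x \<in> K \<and> y \<in> K} = UNIV"
    and split: "K \<subseteq> {x + y | x y. x \<in> K \<inter> A1 \<and> y \<in> K \<inter> A2}"
  shows "{x + y | x y. x \<in> A1 \<and> y \<in> A2} = UNIV"
proof -
  have "v \<in> {x + y | x y. x \<in> A1 \<and> y \<in> A2}" for v
  proof -
    obtain x y where xy: "x \<in> K" "y \<in> K" "v = x - y"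
      using gen by blast
    obtain x1 x2 where x: "x = x1 + x2" "x1 \<in> A1" "x2 \<in> A2"
      using split xy(1) by blast
    obtain y1 y2 where y: "y = y1 + y2" "y1 \<in> A1" "y2 \<in> A2"
      using split xy(2) by blast
    have "v = (x1 - y1) + (x2 - y2)"
      using xy(3) x(1) y(1) by (simp add: algebra_simps)
    then show ?thesis
      using x y subspace_diff assms(1,2) by blast
  qed
  then show ?thesis by blast
qed

lemma irreducible_coneD:
  assumes "irreducible_cone K" "convex_cone K" "subspace A1" "subspace A2" "A1 \<inter> A2 = {0}"
    and "{x + y | x y. x \<in> A1 \<and> y \<in> A2} = UNIV"
    and "K \<subseteq> {x + y | x y. x \<in> K \<inter> A1 \<and> y \<in> K \<inter> A2}"
  shows "A1 = {0} \<or> A2 = {0}"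
proof -
  have "{x + y | x y. x \<in> K \<inter> A1 \<and> y \<in> K \<inter> A2} \<subseteq> K"
    using convex_cone_add[OF assms(2)] by blast
  then show ?thesis
    using assms unfolding irreducible_cone_def by blast
qed

lemma irreducible_cone_order_interval_scalar:
  fixes K :: "'a::euclidean_space set" and T :: "'a \<Rightarrow> 'a"
  assumes cpg: "closed_pointed_generating_cone K" and u: "u \<in> interior (dual_cone K)"
    and irr: "irreducible_cone K" and lin: "linear T"
    and T_pos: "\<And>x. x \<in> K \<Longrightarrow> T x \<in> K" and T_le: "\<And>x. x \<in> K \<Longrightarrow> x - T x \<in> K"
  shows "\<exists>t\<ge>0. \<forall>x. T x = t *\<^sub>R x"
proof -
  have K: "closed K" "convex_cone K" and gen: "{x - y | x y. x \<in> K \<and> y \<in> K} = UNIV"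
    using cpg closed_pointed_generating_cone_imp_convex_cone
    by (auto simp: closed_pointed_generating_cone_def)
  have ext_K: "e \<in> K" "u \<bullet> e = 1" if "e extreme_point_of cone_base K u" for e
    using that by (auto simp: extreme_point_of_def cone_base_def)
  have eig: "T e = (u \<bullet> T e) *\<^sub>R e" if "e extreme_point_of cone_base K u" for e
    using extreme_point_of_cone_base_summand[OF K(2) u that T_pos T_le, of e] ext_K(1)[OF that]
    by simp
  obtain x0 where x0: "x0 \<in> K" "x0 \<noteq> 0"
  proof -
    obtain i :: 'a where i: "i \<in> Basis"
      using nonempty_Basis by blast
    obtain x y where xy: "x \<in> K" "y \<in> K" "i = x - y"
      using gen by blast
    then have "x \<noteq> 0 \<or> y \<noteq> 0"
      using nonzero_Basis[OF i] by auto
    then show ?thesis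
      using that xy by blast
  qed
  have "cone_base K u \<noteq> {}"
    using scaleR_mem_cone_base[OF K(2) u x0] by blast
  moreover have "convex K"
    using K(2) by (simp add: convex_cone_def)
  ultimately obtain e1 where e1: "e1 extreme_point_of cone_base K u"
    using extreme_point_exists_convex[OF compact_cone_base[OF K(1) u] convex_cone_base]
    by blast
  define \<mu> where "\<mu> = u \<bullet> T e1"
  define D where "D x = T x - \<mu> *\<^sub>R x" for x
  have linD: "linear D"
    unfolding D_def by (intro linear_compose_sub lin linear_scale_self)
  define N where "N = {x. D x = 0}"
  have sub: "subspace N" "subspace (range D)"
    using linear_subspace_kernel[OF linD] linear_subspace_image[OF linD subspace_UNIV]
    by (simp_all add: N_def)
  have split: "K \<subseteq> {x + y | x y. x \<in> K \<inter> N \<and> y \<in> K \<inter> range D}"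
  proof (rule cone_subset_if_extreme_points_of_base_subset[OF K u])
    show "convex_cone {x + y | x y. x \<in> K \<inter> N \<and> y \<in> K \<inter> range D}"
      using convex_cone_Int_subspace K(2) sub by (intro convex_cone_set_plus) auto
    fix e assume e: "e extreme_point_of cone_base K u"
    have "e \<in> N \<or> e \<in> range D"
      using eig[OF e] eigenvector_mem_range[OF lin eig[OF e], of \<mu>]
      by (cases "u \<bullet> T e = \<mu>") (auto simp: N_def D_def)
    moreover have "0 \<in> K \<inter> N" "0 \<in> K \<inter> range D"
      using convex_cone_contains_0[OF K(2)] subspace_0[OF sub(1)] subspace_0[OF sub(2)]
      by auto
    moreover have "e = e + 0" "e = 0 + e"
      by simp_all
    ultimately show "e \<in> {x + y | x y. x \<in> K \<inter> N \<and> y \<in> K \<inter> range D}"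
      using ext_K(1)[OF e] by blast
  qed
  have sum_UNIV: "{x + y | x y. x \<in> N \<and> y \<in> range D} = UNIV"
    by (rule generating_cone_split_imp_sum_UNIV[OF sub gen split])
  have "N \<inter> range D = {0}"
    unfolding N_def by (rule linear_kernel_Int_range[OF linD sum_UNIV[unfolded N_def mem_Collect_eq]])
  moreover have "e1 \<in> N" "e1 \<noteq> 0"
    using eig[OF e1] ext_K(2)[OF e1] by (auto simp: N_def D_def \<mu>_def)
  ultimately have "range D = {0}"
    using irreducible_coneD[OF irr K(2) sub _ sum_UNIV split] by blast
  moreover have "0 \<le> \<mu>"
    using T_pos[OF ext_K(1)[OF e1]] interior_subset[of "dual_cone K"] u
    by (auto simp: \<mu>_def dual_cone_def)
  ultimately show ?thesis
    unfolding D_def by (metis (no_types, lifting) eq_iff_diff_eq_0 rangeI singletonD)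
qed

lemma omega_hat_inner:
  fixes \<omega> :: "'a::euclidean_space \<Rightarrow> 'b::euclidean_space \<Rightarrow> real"
  assumes "bilinear \<omega>"
  shows "omega_hat \<omega> a \<bullet> b = \<omega> a b"
proof -
  have lin: "linear (\<omega> a)"
    using assms by (simp add: bilinear_def)
  have "\<omega> a b = \<omega> a (\<Sum>i\<in>Basis. (b \<bullet> i) *\<^sub>R i)"
    by (simp add: euclidean_representation)
  also have "\<dots> = (\<Sum>i\<in>Basis. (b \<bullet> i) * \<omega> a i)"
    by (simp add: linear_sum[OF lin] linear_scale[OF lin])
  also have "\<dots> = omega_hat \<omega> a \<bullet> b"
    unfolding omega_hat_def inner_sum_left by (rule sum.cong) (auto simp: inner_commute)
  finally show ?thesis by simp
qed

lemma linear_omega_hat: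
  fixes \<omega> :: "'a::euclidean_space \<Rightarrow> 'b::euclidean_space \<Rightarrow> real"
  assumes "bilinear \<omega>"
  shows "linear (omega_hat \<omega>)"
  by (simp add: linear_iff omega_hat_def bilinear_ladd[OF assms] bilinear_lmul[OF assms]
      scaleR_add_left sum.distrib scaleR_sum_right)

lemma omega_hat_add:
  "omega_hat (\<lambda>a b. \<omega>1 a b + \<omega>2 a b) a = omega_hat \<omega>1 a + omega_hat \<omega>2 a"
  by (simp add: omega_hat_def scaleR_add_left sum.distrib)

lemma omega_hat_mem_cone:
  assumes "closed KB" "convex_cone KB" "max_tensor_positive KA KB \<omega>" "a \<in> dual_cone KA"
  shows "omega_hat \<omega> a \<in> KB"
proof -
  have "bilinear \<omega>"
    using assms(3) by (simp add: max_tensor_positive_def)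
  then have "omega_hat \<omega> a \<in> dual_cone (dual_cone KB)"
    using assms(3,4)
    by (auto simp: dual_cone_def[of "dual_cone KB"] max_tensor_positive_def omega_hat_inner)
  then show ?thesis
    using dual_cone_dual_cone[OF assms(1,2)] by simp
qed

lemma adjoint_order_interval:
  fixes S :: "'a::euclidean_space \<Rightarrow> 'a"
  assumes lin: "linear S" and S_pos: "\<And>c. c \<in> C \<Longrightarrow> S c \<in> C"
    and S_le: "\<And>c. c \<in> C \<Longrightarrow> c - S c \<in> C" and x: "x \<in> dual_cone C"
  shows "adjoint S x \<in> dual_cone C" "x - adjoint S x \<in> dual_cone C"
proof -
  have "adjoint S x \<bullet> c = x \<bullet> S c" "(x - adjoint S x) \<bullet> c = x \<bullet> (c - S c)" for c
    by (simp_all add: adjoint_clauses(2)[OF lin] inner_diff_left inner_diff_right)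
  then show "adjoint S x \<in> dual_cone C" "x - adjoint S x \<in> dual_cone C"
    using x S_pos S_le by (simp_all add: dual_cone_def)
qed

lemma irreducible_dual_order_interval_scalar:
  fixes K :: "'a::euclidean_space set" and S :: "'a \<Rightarrow> 'a"
  assumes cpg: "closed_pointed_generating_cone K" and u: "u \<in> interior (dual_cone K)"
    and irr: "irreducible_cone K" and lin: "linear S"
    and S_pos: "\<And>c. c \<in> dual_cone K \<Longrightarrow> S c \<in> dual_cone K"
    and S_le: "\<And>c. c \<in> dual_cone K \<Longrightarrow> c - S c \<in> dual_cone K"
  shows "\<exists>t\<ge>0. \<forall>c. S c = t *\<^sub>R c"
proof -
  have bipolar: "dual_cone (dual_cone K) = K"
    using cpg closed_pointed_generating_cone_imp_convex_cone dual_cone_dual_cone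
    by (auto simp: closed_pointed_generating_cone_def)
  obtain t where t: "t \<ge> 0" "\<And>x. adjoint S x = t *\<^sub>R x"
    using irreducible_cone_order_interval_scalar[OF cpg u irr adjoint_linear[OF lin]]
      adjoint_order_interval[OF lin S_pos S_le] bipolar
    by metis
  have "S c = t *\<^sub>R c" for c
  proof -
    have "S c \<bullet> x = t *\<^sub>R c \<bullet> x" for x
      using adjoint_clauses(1)[OF lin, of c x] t(2) by simp
    then show ?thesis
      using vector_eq_rdot by blast
  qed
  then show ?thesis
    using t(1) by blast
qed

lemma isomorphism_state_summand_proportional:
  fixes KA :: "'a::euclidean_space set" and KB :: "'b::euclidean_space set"
  assumes A: "abstract_state_space KA uA" and irr: "irreducible_cone KA"
    and B: "abstract_state_space KB uB" and iso: "isomorphism_state KA uA KB uB \<omega>"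
    and pos1: "max_tensor_positive KA KB \<omega>1" and pos2: "max_tensor_positive KA KB \<omega>2"
    and sum: "\<forall>a b. \<omega> a b = \<omega>1 a b + \<omega>2 a b"
  shows "\<exists>t\<ge>0. \<forall>a b. \<omega>1 a b = t * \<omega> a b"
proof -
  define \<phi> where "\<phi> = omega_hat \<omega>"
  have cpgA: "closed_pointed_generating_cone KA" and uA: "uA \<in> interior (dual_cone KA)"
    using A by (auto simp: abstract_state_space_def)
  have KB: "closed KB" "convex_cone KB"
    using B closed_pointed_generating_cone_imp_convex_cone
    by (auto simp: abstract_state_space_def closed_pointed_generating_cone_def)
  have lin: "linear \<phi>" and bij: "bij \<phi>" and order_iso: "\<And>a. \<phi> a \<in> KB \<longleftrightarrow> a \<in> dual_cone KA"
    and bil: "bilinear \<omega>"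
    using iso by (auto simp: isomorphism_state_def max_tensor_state_def max_tensor_positive_def \<phi>_def)
  have bil1: "bilinear \<omega>1"
    using pos1 by (simp add: max_tensor_positive_def)
  have \<phi>_split: "\<phi> a = omega_hat \<omega>1 a + omega_hat \<omega>2 a" for a
  proof -
    have "\<omega> = (\<lambda>a b. \<omega>1 a b + \<omega>2 a b)"
      using sum by (simp add: fun_eq_iff)
    then show ?thesis
      by (simp add: \<phi>_def omega_hat_add)
  qed
  obtain \<psi> where lin_\<psi>: "linear \<psi>" and "\<psi> \<circ> \<phi> = id"
    using linear_injective_left_inverse[OF lin bij_is_inj[OF bij]] by blast
  then have \<phi>_\<psi>: "\<phi> (\<psi> y) = y" for y
    using bij by (metis bij_inv_eq_iff comp_apply id_apply)
  define S where "S = \<psi> \<circ> omega_hat \<omega>1"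
  have \<phi>_S: "\<phi> (S a) = omega_hat \<omega>1 a" for a
    by (simp add: S_def \<phi>_\<psi>)
  have linS: "linear S"
    unfolding S_def using linear_compose[OF linear_omega_hat[OF bil1] lin_\<psi>] .
  have "S c \<in> dual_cone KA" "c - S c \<in> dual_cone KA" if "c \<in> dual_cone KA" for c
  proof -
    have "\<phi> (c - S c) = omega_hat \<omega>2 c"
      by (simp add: linear_diff[OF lin] \<phi>_S \<phi>_split[of c])
    then show "S c \<in> dual_cone KA" "c - S c \<in> dual_cone KA"
      using omega_hat_mem_cone[OF KB pos1 that] omega_hat_mem_cone[OF KB pos2 that]
      by (simp_all add: order_iso[symmetric] \<phi>_S)
  qed
  then obtain t where t: "t \<ge> 0" "\<And>c. S c = t *\<^sub>R c"
    using irreducible_dual_order_interval_scalar[OF cpgA uA irr linS] by metis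
  have "\<omega>1 a b = t * \<omega> a b" for a b
  proof -
    have "\<omega>1 a b = \<phi> (S a) \<bullet> b"
      by (simp add: \<phi>_S omega_hat_inner[OF bil1])
    also have "\<dots> = t * \<omega> a b"
      by (simp add: t(2) \<phi>_def omega_hat_inner[OF bil] bilinear_lmul[OF bil])
    finally show ?thesis .
  qed
  then show ?thesis
    using t(1) by blast
qed

theorem corollary3p5:
  fixes KA :: "'a::euclidean_space set" and uA :: 'a
    and KB :: "'b::euclidean_space set" and uB :: 'b
    and \<omega> :: "'a \<Rightarrow> 'b \<Rightarrow> real"
  assumes "abstract_state_space KA uA"
    and "irreducible_cone KA"
    and "abstract_state_space KB uB"
    and "isomorphism_state KA uA KB uB \<omega>"
  shows "pure_max_tensor KA KB \<omega>"
proof -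
  have "max_tensor_positive KA KB \<omega>" "\<omega> uA uB \<noteq> 0"
    using assms(4) by (auto simp: isomorphism_state_def max_tensor_state_def)
  then show ?thesis
    using isomorphism_state_summand_proportional[OF assms] unfolding pure_max_tensor_def
    by blast
qed

end
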